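(* Let $(A,\circ)$ be a Novikov algebra, $\{a,b\}=a\circ b+b\circ a$, $[a,b]=a\circ b-b\circ a$, and $(a,b,c)^+=\{a,\{b,c\}\}-\{\{a,b\},c\}$. Then for all $a,b,c,d\in A$, $$\{(a,b,c)^+,d\}-\{(a,d,c)^+,b\}=\{[c,a],[b,d]\}.$$
   Context: A (right) Novikov algebra is an algebra $(A,\circ)$ satisfying $a\circ(b\circ c)-(a\circ b)\circ c=a\circ(c\circ b)-(a\circ c)\circ b$ and $a\circ(b\circ c)=b\circ(a\circ c)$ for all $a,b,c$. *)

theory Defs
  imports Main
begin

definition novikov :: "('a::ab_group_add \<Rightarrow> 'a \<Rightarrow> 'a) \<Rightarrow> bool" where
  "novikov m \<longleftrightarrow>
     (\<forall>a b c. m (a + b) c = m a c + m b c) \<and>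
     (\<forall>a b c. m a (b + c) = m a b + m a c) \<and>
     (\<forall>a b c. m a (m b c) - m (m a b) c = m a (m c b) - m (m a c) b) \<and>
     (\<forall>a b c. m a (m b c) = m b (m a c))"

definition anticomm :: "('a::ab_group_add \<Rightarrow> 'a \<Rightarrow> 'a) \<Rightarrow> 'a \<Rightarrow> 'a \<Rightarrow> 'a" where
  "anticomm m a b = m a b + m b a"

definition comm :: "('a::ab_group_add \<Rightarrow> 'a \<Rightarrow> 'a) \<Rightarrow> 'a \<Rightarrow> 'a \<Rightarrow> 'a" where
  "comm m a b = m a b - m b a"

definition assoc_plus :: "('a::ab_group_add \<Rightarrow> 'a \<Rightarrow> 'a) \<Rightarrow> 'a \<Rightarrow> 'a \<Rightarrow> 'a \<Rightarrow> 'a" where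
  "assoc_plus m a b c = anticomm m a (anticomm m b c) - anticomm m (anticomm m a b) c"

end

theory Submission
  imports Defs
begin

text \<open>The symmetrized associator factors through a commutator:
  \<open>(a,b,c)\<^sup>+ = {b,[c,a]}\<close>, which follows from left commutativity and right symmetry
  in the form \<open>(x\<circ>y)\<circ>z - (x\<circ>z)\<circ>y = x\<circ>[y,z]\<close>.
  Writing \<open>x = [c,a]\<close>, the left-hand side therefore becomes
  \<open>{{b,x},d} - {b,{x,d}} = -(b,x,d)\<^sup>+ = -{x,[d,b]}\<close>, which is the right-hand side.\<close>

lemma anticomm_commute: "anticomm m a b = anticomm m b a"
  by (simp add: anticomm_def add.commute)

lemma comm_swap: "comm m b a = - comm m a b"
  by (simp add: comm_def)

locale biadditive =
  fixes m :: "'a::ab_group_add \<Rightarrow> 'a \<Rightarrow> 'a"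
  assumes add_left: "m (a + b) c = m a c + m b c"
    and add_right: "m a (b + c) = m a b + m a c"
begin

lemma zero_left: "m 0 b = 0"
  using add_left[of 0 0 b] by simp

lemma zero_right: "m a 0 = 0"
  using add_right[of a 0 0] by simp

lemma minus_left: "m (- a) b = - m a b"
  using add_left[of "- a" a b] by (simp add: zero_left eq_neg_iff_add_eq_0)

lemma minus_right: "m a (- b) = - m a b"
  using add_right[of a "- b" b] by (simp add: zero_right eq_neg_iff_add_eq_0)

lemma diff_left: "m (a - b) c = m a c - m b c"
  using add_left[of a "- b" c] by (simp add: minus_left)

lemma diff_right: "m a (b - c) = m a b - m a c"
  using add_right[of a b "- c"] by (simp add: minus_right)

lemma anticomm_minus_right: "anticomm m a (- b) = - anticomm m a b"
  by (simp add: anticomm_def minus_left minus_right)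

end

locale novikov_algebra = biadditive +
  assumes right_symmetric: "m a (m b c) - m (m a b) c = m a (m c b) - m (m a c) b"
    and left_commute: "m a (m b c) = m b (m a c)"
begin

lemma right_mult_commutator: "m (m a b) c = m (m a c) b + m a (m b c) - m a (m c b)"
  using right_symmetric[of a b c] by (simp add: algebra_simps)

lemma assoc_plus_eq_anticomm_comm: "assoc_plus m a b c = anticomm m b (comm m c a)"
proof -
  have "assoc_plus m a b c - anticomm m b (comm m c a)
      = m a (m b c) + m a (m c b) + m (m b c) a + m (m c b) a
        - m (m a b) c - m (m b a) c - m c (m a b) - m c (m b a)
        - m b (m c a) + m b (m a c) - m (m c a) b + m (m a c) b"
    by (simp add: assoc_plus_def anticomm_def comm_def add_left add_right diff_left diff_right
        algebra_simps)
  also have "\<dots> = 0"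
    by (simp add: right_mult_commutator[of b c a] right_mult_commutator[of c b a]
        right_mult_commutator[of a c b] left_commute[of c a b] left_commute[of c b a]
        left_commute[of b a c] algebra_simps)
  finally show ?thesis by simp
qed

end

lemma novikov_algebra_if_novikov:
  assumes "novikov m"
  shows "novikov_algebra m"
  using assms unfolding novikov_def by unfold_locales blast+

theorem mainTheorem10:
  fixes m :: "'a::ab_group_add \<Rightarrow> 'a \<Rightarrow> 'a"
  assumes "novikov m"
  shows "anticomm m (assoc_plus m a b c) d - anticomm m (assoc_plus m a d c) b
         = anticomm m (comm m c a) (comm m b d)"
proof -
  interpret novikov_algebra m
    using assms by (rule novikov_algebra_if_novikov)
  let ?x = "comm m c a"
  have outer_swap: "anticomm m (anticomm m d ?x) b = anticomm m b (anticomm m ?x d)"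
    by (metis anticomm_commute)
  have "anticomm m (assoc_plus m a b c) d - anticomm m (assoc_plus m a d c) b
      = anticomm m (anticomm m b ?x) d - anticomm m (anticomm m d ?x) b"
    by (simp add: assoc_plus_eq_anticomm_comm)
  also have "\<dots> = - assoc_plus m b ?x d"
    by (simp add: outer_swap assoc_plus_def)
  also have "\<dots> = anticomm m ?x (comm m b d)"
    by (simp add: assoc_plus_eq_anticomm_comm comm_swap[of m b d] anticomm_minus_right)
  finally show ?thesis .
qed

end
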